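(* For all integers $L\ge 0$ and $n\ge 1$, $$S_L(n+3,n)=\frac{n(n+1)(n+2)(n+3)}{3\cdot 2^4}\left[\frac{(n+3)!}{3}\right]^{L}\left(n^2\left(\frac{3}{8}\right)^{L}+n\left(\frac{1}{4^{L-1}}-\frac{3^{L+1}}{8^L}\right)+\frac{2+2\cdot 3^L}{8^L}-\frac{1}{4^{L-1}}\right).$$ In particular, $S_0(n+3,n)=\frac{1}{48}n^2(n+1)^2(n+2)(n+3)$.
   Context: For an integer $L\ge 0$ let ${}_0F_L(z)=\sum_{n=0}^{\infty}\frac{z^n}{(n!)^{L+1}}$. Define the numbers $S_L(n,l)$ ($n,l\ge 0$) by the formal power series identities $\frac{({}_0F_L(z)-1)^l}{l!}=\sum_{n\ge l}\frac{S_L(n,l)}{(n!)^{L+1}}z^n$ for each $l\ge 0$. In particular $S_0(n,l)$ are the Stirling numbers of the second kind. *)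

theory Defs
  imports "HOL-Computational_Algebra.Formal_Power_Series"
begin

definition hyp0F :: "nat \<Rightarrow> real fps" where
  "hyp0F L = Abs_fps (\<lambda>n. 1 / (fact n) ^ (L + 1))"

text \<open>S_L(n,l) defined by (0F_L(z) - 1)^l / l! = sum_n S_L(n,l) z^n / (n!)^(L+1).\<close>
definition S :: "nat \<Rightarrow> nat \<Rightarrow> nat \<Rightarrow> real" where
  "S L n l = fps_nth (fps_const (1 / fact l) * (hyp0F L - 1) ^ l) n * (fact n) ^ (L + 1)"

end

theory Submission
  imports Defs
begin

text \<open>
  Write 0F_L(z) - 1 = z H(z), where H has coefficients h_k = 1/((k+1)!)^(L+1) and h_0 = 1.
  Then (0F_L(z) - 1)^n = z^n H(z)^n, so S_L(n+3,n) = (n+3)!^(L+1) / n! times the coefficient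
  of z^3 in H^n, which is n h_3 + n(n-1) h_1 h_2 + C(n,3) h_1^3. The stated closed form is an
  algebraic rearrangement of this expression.
\<close>

unbundle fps_syntax

lemma fps_power_nth_1:
  fixes H :: "'a::comm_ring_1 fps"
  assumes "H $ 0 = 1"
  shows "(H ^ n) $ 1 = of_nat n * H $ 1"
  by (induction n) (simp_all add: assms fps_nth_power_0 algebra_simps)

lemma fps_power_nth_2:
  fixes H :: "'a::field_char_0 fps"
  assumes "H $ 0 = 1"
  shows "(H ^ n) $ 2 = of_nat n * H $ 2 + of_nat n * (of_nat n - 1) / 2 * (H $ 1)\<^sup>2"
proof (induction n)
  case (Suc n)
  have "(H ^ Suc n) $ 2 = H $ 0 * (H ^ n) $ 2 + H $ 1 * (H ^ n) $ 1 + H $ 2 * (H ^ n) $ 0"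
    by (simp add: fps_mult_nth numeral_2_eq_2)
  then show ?case
    by (simp only: Suc.IH fps_power_nth_1[OF assms] fps_nth_power_0 assms)
      (simp add: field_simps power2_eq_square)
qed simp

lemma fps_power_nth_3:
  fixes H :: "'a::field_char_0 fps"
  assumes "H $ 0 = 1"
  shows "(H ^ n) $ 3 = of_nat n * H $ 3 + of_nat n * (of_nat n - 1) * H $ 1 * H $ 2
    + of_nat n * (of_nat n - 1) * (of_nat n - 2) / 6 * (H $ 1) ^ 3"
proof (induction n)
  case (Suc n)
  have "(H ^ Suc n) $ 3 = H $ 0 * (H ^ n) $ 3 + H $ 1 * (H ^ n) $ 2 + H $ 2 * (H ^ n) $ 1
      + H $ 3 * (H ^ n) $ 0"
    by (simp add: fps_mult_nth numeral_2_eq_2 numeral_3_eq_3)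
  then show ?case
    by (simp only: Suc.IH fps_power_nth_1[OF assms] fps_power_nth_2[OF assms] fps_nth_power_0 assms)
      (simp add: field_simps power2_eq_square power3_eq_cube)
qed simp

lemma hyp0F_minus_1_eq: "hyp0F L - 1 = fps_X * fps_shift 1 (hyp0F L)"
  by (rule fps_ext) (simp add: hyp0F_def fps_X_mult_nth)

lemma S_add_eq_shift_power_nth:
  "S L (n + k) n = (fps_shift 1 (hyp0F L) ^ n) $ k / fact n * fact (n + k) ^ (L + 1)"
  by (simp add: S_def hyp0F_minus_1_eq power_mult_distrib fps_X_power_mult_nth)

lemma S_add_3:
  "S L (n + 3) n = fact (n + 3) ^ (L + 1) / fact n *
     (real n / 24 ^ (L + 1) + real n * (real n - 1) / 12 ^ (L + 1)
      + real n * (real n - 1) * (real n - 2) / (6 * 8 ^ (L + 1)))"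
proof -
  let ?H = "fps_shift 1 (hyp0F L)"
  have "?H $ 0 = 1"
    by (simp add: hyp0F_def)
  note power_nth_3 = fps_power_nth_3[OF this, of n]
  have "?H $ 1 = 1 / 2 ^ (L + 1)" "?H $ 2 = 1 / 6 ^ (L + 1)" "?H $ 3 = 1 / 24 ^ (L + 1)"
    by (simp_all add: hyp0F_def fact_numeral)
  moreover have "(1 / 2 ^ (L + 1)) * (1 / 6 ^ (L + 1)) = (1 / 12 ^ (L + 1) :: real)"
    "(1 / 2 ^ (L + 1)) ^ 3 = (1 / 8 ^ (L + 1) :: real)"
    by (simp_all add: power_one_over power3_eq_cube flip: power_mult_distrib)
  ultimately show ?thesis
    by (simp only: S_add_eq_shift_power_nth power_nth_3 mult.assoc) (simp add: field_simps)
qed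

lemma S_add_3_sum_conv:
  fixes x :: real
  shows "x / 24 ^ (L + 1) + x * (x - 1) / 12 ^ (L + 1) + x * (x - 1) * (x - 2) / (6 * 8 ^ (L + 1))
    = x / (48 * 3 ^ L) * (x\<^sup>2 * (3 / 8) ^ L
        + x * (1 / (4::real) powi (int L - 1) - 3 ^ (L + 1) / 8 ^ L)
        + (2 + 2 * 3 ^ L) / 8 ^ L - 1 / (4::real) powi (int L - 1))"
proof -
  define a c :: real where "a = 3 ^ L" and "c = 2 ^ L"
  have "(4::real) powi (int L - 1) = 4 ^ L / 4"
    by (simp add: power_int_diff)
  also have "\<dots> = c\<^sup>2 / 4"
    by (simp add: c_def power2_eq_square flip: power_mult_distrib)
  finally have "(4::real) powi (int L - 1) = c\<^sup>2 / 4" .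
  moreover have "(8::real) ^ L = c ^ 3" "(12::real) ^ L = a * c\<^sup>2" "(24::real) ^ L = a * c ^ 3"
    by (simp_all add: a_def c_def power2_eq_square power3_eq_cube flip: power_mult_distrib)
  moreover have "a > 0" "c > 0"
    by (simp_all add: a_def c_def)
  ultimately show ?thesis
    by (simp only: power_add power_one_right power_divide flip: a_def)
      (simp add: field_simps power2_eq_square power3_eq_cube)
qed

lemma S_add_3_closed_form:
  "S L (n + 3) n =
      real (n * (n + 1) * (n + 2) * (n + 3)) / (3 * 2 ^ 4) * (fact (n + 3) / 3) ^ L *
      ( (real n)\<^sup>2 * (3 / 8) ^ L
        + real n * (1 / (4::real) powi (int L - 1) - 3 ^ (L + 1) / 8 ^ L)
        + (2 + 2 * 3 ^ L) / 8 ^ L - 1 / (4::real) powi (int L - 1))"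
proof -
  define P where "P = real ((n + 1) * (n + 2) * (n + 3))"
  have "fact (n + 3) = fact n * P"
    by (simp add: P_def fact_Suc numeral_3_eq_3 algebra_simps)
  then have fact_ratio: "fact (n + 3) ^ (L + 1) / fact n = P * fact (n + 3) ^ L"
    by simp
  have falling: "real (n * (n + 1) * (n + 2) * (n + 3)) = real n * P"
    by (simp only: P_def mult.assoc of_nat_mult)
  show ?thesis
    unfolding S_add_3 S_add_3_sum_conv fact_ratio falling power_divide
    by (simp add: field_simps)
qed

theorem mainTheorem6:
  fixes L n :: nat
  assumes "n \<ge> 1"
  shows "S L (n + 3) n =
      real (n * (n + 1) * (n + 2) * (n + 3)) / (3 * 2 ^ 4) * (fact (n + 3) / 3) ^ L *
      ( (real n)\<^sup>2 * (3 / 8) ^ L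
        + real n * (1 / (4::real) powi (int L - 1) - 3 ^ (L + 1) / 8 ^ L)
        + (2 + 2 * 3 ^ L) / 8 ^ L - 1 / (4::real) powi (int L - 1))
    \<and> S 0 (n + 3) n = (1 / 48) * (real n)\<^sup>2 * (real n + 1)\<^sup>2 * (real n + 2) * (real n + 3)"
proof -
  have "S 0 (n + 3) n = real (n * (n + 1) * (n + 2) * (n + 3)) / 48 * (real n * (real n + 1))"
    using S_add_3_closed_form[of 0 n] by (simp add: power_int_def power2_eq_square algebra_simps)
  also have "\<dots> = (1 / 48) * (real n)\<^sup>2 * (real n + 1)\<^sup>2 * (real n + 2) * (real n + 3)"
    by (simp add: field_simps power2_eq_square)
  finally show ?thesis
    using S_add_3_closed_form[of L n] by blast
qed

end
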